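(* $\Omega(\log\log n)$ bits of advice are required for a deterministic online algorithm to achieve an asymptotic approximation ratio greater than $1/2$ for online one-sided bipartite matching, even when the algorithm is given $n$ in advance. More precisely, no online algorithm using $\log\log n-\log\log\log n$ bits of advice (and knowing $n$) achieves an asymptotic approximation ratio greater than $1/2$.
   Context: Online one-sided bipartite matching: offline vertices are known in advance; $n$ online vertices arrive one at a time in adversarial order, each with its set of offline neighbours, and must be irrevocably matched to an unmatched neighbour or left unmatched; the goal is a maximum-size matching. An online algorithm with $b$ bits of advice may read a binary advice string of length $b$ written before the input is processed by an oracle that knows the whole input and has unbounded computational power. The asymptotic approximation ratio of $\mathbb{A}$ is $\liminf_{n}\inf_{I\in\mathcal{I}_n} v(\mathbb{A},I)/v(I)$, with $v(I)$ the maximum matching size. *)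

theory Defs
  imports Complex_Main "HOL-Library.Extended_Real" "HOL-Library.Liminf_Limsup"
begin

text \<open>Instances: a finite set U of offline vertices (natural numbers) and a list G of
  neighbour sets; G ! i is the neighbourhood of the i-th arriving online vertex.
  The list order is the (adversarial) arrival order; n = length G.\<close>

definition valid_instance :: "nat set \<Rightarrow> nat set list \<Rightarrow> bool" where
  "valid_instance U G \<longleftrightarrow> finite U \<and> (\<forall>x \<in> set G. x \<subseteq> U)"

definition is_matching :: "nat set \<Rightarrow> nat set list \<Rightarrow> (nat \<times> nat) set \<Rightarrow> bool" where
  "is_matching U G M \<longleftrightarrow>
     M \<subseteq> {..<length G} \<times> U \<and>
     (\<forall>(i,u) \<in> M. u \<in> G ! i) \<and>
     (\<forall>(i,u) \<in> M. \<forall>(j,w) \<in> M. (i = j \<longleftrightarrow> u = w))"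

definition opt :: "nat set \<Rightarrow> nat set list \<Rightarrow> nat" where
  "opt U G = Max (card ` {M. is_matching U G M})"

text \<open>A deterministic online algorithm with advice, knowing n in advance:
  A n advice U prefix x  is its decision for the current online vertex with neighbour
  set x, given n, the advice string, the offline vertex set U and the neighbour sets of
  the previously arrived online vertices (its own earlier decisions are determined by
  these). Some u = match to u, None = leave unmatched. An invalid choice (not an
  unmatched neighbour) is treated as leaving the vertex unmatched.\<close>
type_synonym online_alg = "nat \<Rightarrow> bool list \<Rightarrow> nat set \<Rightarrow> nat set list \<Rightarrow> nat set \<Rightarrow> nat option"

definition alg_step :: "online_alg \<Rightarrow> nat \<Rightarrow> bool list \<Rightarrow> nat set
    \<Rightarrow> nat set list \<times> nat set \<Rightarrow> nat set \<Rightarrow> nat set list \<times> nat set" where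
  "alg_step A n adv U st x =
     (case A n adv U (fst st) x of
        Some u \<Rightarrow> if u \<in> x \<and> u \<in> U \<and> u \<notin> snd st
                  then (fst st @ [x], insert u (snd st)) else (fst st @ [x], snd st)
      | None \<Rightarrow> (fst st @ [x], snd st))"

definition alg_value :: "online_alg \<Rightarrow> bool list \<Rightarrow> nat set \<Rightarrow> nat set list \<Rightarrow> nat" where
  "alg_value A adv U G = card (snd (foldl (alg_step A (length G) adv U) ([], {}) G))"

definition advice_bits :: "nat \<Rightarrow> nat" where
  "advice_bits n = nat \<lfloor>log 2 (log 2 (real n)) - log 2 (log 2 (log 2 (real n)))\<rfloor>"

definition asymp_ratio :: "online_alg \<Rightarrow> (nat set \<Rightarrow> nat set list \<Rightarrow> bool list) \<Rightarrow> ereal" where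
  "asymp_ratio A adv_of =
     liminf (\<lambda>n. INF I \<in> {(U, G). valid_instance U G \<and> length G = n \<and> opt U G > 0}.
        ereal (real (alg_value A (adv_of (fst I) (snd I)) (fst I) (snd I)) / real (opt (fst I) (snd I))))"

end

theory Submission
  imports Defs "HOL-Real_Asymp.Real_Asymp"
begin

text \<open>With b advice bits there are only 2^b candidate runs of the algorithm, and the adversary
  plays against all of them at once on n offline vertices. It keeps a list of distinct offline
  vertices us, the j-th being an optimal partner of the j-th request, so that OPT = n in the end.
  Among the fresh vertices (not yet in us) it looks for a set \<sigma> of runs and a class Z of fresh
  vertices matched by exactly the runs in \<sigma> with |Z| > |I - \<sigma>|. Requesting Z, the runs in \<sigma>
  cannot match, the others match at most one vertex each, so some u \<in> Z stays unmatched by all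
  runs and becomes the next partner. Then the potential 2|M| + |fresh - M| of every run does not
  increase. If no such class exists, at most K = 2^b 2^(2^b) fresh vertices remain, and they are
  requested one at a time. Hence every run ends with 2|M| \<le> n + K, and K = o(n) because
  2^b \<le> log n / 2 and 2^(2^b) \<le> sqrt n.\<close>

definition matched :: "online_alg \<Rightarrow> nat \<Rightarrow> bool list \<Rightarrow> nat set \<Rightarrow> nat set list \<Rightarrow> nat set" where
  "matched A n adv U G = snd (foldl (alg_step A n adv U) ([], {}) G)"

lemma fst_foldl_alg_step: "fst (foldl (alg_step A n adv U) st G) = fst st @ G"
  by (induction G arbitrary: st) (auto simp: alg_step_def split: option.splits)

lemma matched_Nil [simp]: "matched A n adv U [] = {}"
  by (simp add: matched_def)

lemma matched_snoc: "matched A n adv U (G @ [Z]) =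
  (case A n adv U G Z of
     Some w \<Rightarrow> if w \<in> Z \<and> w \<in> U \<and> w \<notin> matched A n adv U G
               then insert w (matched A n adv U G) else matched A n adv U G
   | None \<Rightarrow> matched A n adv U G)"
proof -
  define st where "st = foldl (alg_step A n adv U) ([], {}) G"
  have "fst st = G"
    using fst_foldl_alg_step[of A n adv U "([], {})" G] by (simp add: st_def)
  moreover have "matched A n adv U (G @ [Z]) = snd (alg_step A n adv U st Z)"
    by (simp add: matched_def st_def)
  ultimately show ?thesis
    by (simp add: alg_step_def matched_def st_def split: option.splits)
qed

lemma matched_snoc_cases:
  "matched A n adv U (G @ [Z]) = matched A n adv U G \<or>
   (\<exists>w\<in>Z. w \<notin> matched A n adv U G \<and> matched A n adv U (G @ [Z]) = insert w (matched A n adv U G))"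
  unfolding matched_snoc by (auto split: option.splits)

lemma matched_subset: "matched A n adv U G \<subseteq> U"
  by (induction G rule: rev_induct) (auto simp: matched_snoc split: option.splits)

lemma alg_value_eq_card_matched: "alg_value A adv U G = card (matched A (length G) adv U G)"
  by (simp add: alg_value_def matched_def)

definition potential :: "'a set \<Rightarrow> 'a set \<Rightarrow> nat" where
  "potential N M = 2 * card M + card (N - M)"

lemma potential_remove_le_Suc:
  assumes "finite N" "finite M" "u \<in> N"
    and "M' = M \<or> (\<exists>w\<in>N. w \<notin> M \<and> M' = insert w M)"
  shows "potential (N - {u}) M' \<le> Suc (potential N M)"
  using assms(4)
proof
  assume "M' = M"
  then show ?thesis
    using assms by (auto simp: potential_def intro!: le_SucI card_mono)
next
  assume "\<exists>w\<in>N. w \<notin> M \<and> M' = insert w M"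
  then obtain w where w: "w \<in> N" "w \<notin> M" "M' = insert w M" by blast
  have "card (N - {u} - M') \<le> card (N - M - {w})"
    using w assms by (intro card_mono) auto
  moreover have "card (N - M) > 0" using w assms by (auto simp: card_gt_0_iff)
  ultimately show ?thesis
    using w assms by (simp add: potential_def)
qed

lemma potential_remove_le:
  assumes "finite N" "finite M" "u \<in> N"
    and "M' = M \<or> (\<exists>w\<in>N. w \<notin> M \<and> M' = insert w M)"
    and "M' \<noteq> M \<longrightarrow> u \<notin> M'"
  shows "potential (N - {u}) M' \<le> potential N M"
  using assms(4)
proof
  assume "M' = M"
  then show ?thesis
    using assms by (simp add: potential_def card_mono Diff_mono)
next
  assume "\<exists>w\<in>N. w \<notin> M \<and> M' = insert w M"
  then obtain w where w: "w \<in> N" "w \<notin> M" "M' = insert w M" by blast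
  then have "{w, u} \<subseteq> N - M" "u \<noteq> w" using assms by auto
  moreover have "N - {u} - M' = (N - M) - {w, u}" using w by auto
  ultimately have "card (N - {u} - M') = card (N - M) - 2" "card (N - M) \<ge> 2"
    using assms card_mono[of "N - M" "{w, u}"] by (auto simp: card_Diff_subset)
  then show ?thesis
    using w assms by (simp add: potential_def)
qed

lemma card_le_if_membership_classes_small:
  fixes M :: "'i \<Rightarrow> 'a set"
  assumes "finite I" "finite N"
    and small: "\<And>\<sigma>. \<sigma> \<subseteq> I \<Longrightarrow> card {v\<in>N. \<forall>i\<in>I. v \<in> M i \<longleftrightarrow> i \<in> \<sigma>} \<le> card (I - \<sigma>)"
  shows "card N \<le> card I * 2 ^ card I"
proof -
  let ?C = "\<lambda>\<sigma>. {v\<in>N. \<forall>i\<in>I. v \<in> M i \<longleftrightarrow> i \<in> \<sigma>}"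
  have "N \<subseteq> (\<Union>\<sigma>\<in>Pow I. ?C \<sigma>)"
  proof
    fix v assume "v \<in> N"
    then have "v \<in> ?C {i\<in>I. v \<in> M i}" by simp
    then show "v \<in> (\<Union>\<sigma>\<in>Pow I. ?C \<sigma>)" by (intro UN_I[of "{i\<in>I. v \<in> M i}"]) auto
  qed
  then have "card N \<le> card (\<Union>\<sigma>\<in>Pow I. ?C \<sigma>)"
    using assms by (intro card_mono finite_UN_I) auto
  also have "\<dots> \<le> (\<Sum>\<sigma>\<in>Pow I. card (?C \<sigma>))"
    using assms by (intro card_UN_le) simp
  also have "\<dots> \<le> (\<Sum>\<sigma>\<in>Pow I. card I)"
  proof (rule sum_mono)
    fix \<sigma> assume "\<sigma> \<in> Pow I"
    then have "card (?C \<sigma>) \<le> card (I - \<sigma>)" using small by simp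
    also have "\<dots> \<le> card I" using assms(1) by (simp add: card_mono)
    finally show "card (?C \<sigma>) \<le> card I" .
  qed
  also have "\<dots> = card I * 2 ^ card I"
    using assms by (simp add: card_Pow)
  finally show ?thesis .
qed

text \<open>The runs in \<sigma> have already matched all of Z and cannot move; each other run claims at
  most one vertex of Z, so some vertex of Z is claimed by none.\<close>
lemma exists_unclaimed_vertex:
  fixes M M' :: "'i \<Rightarrow> 'a set"
  assumes "finite I" "\<sigma> \<subseteq> I"
    and Z: "Z = {v\<in>N. \<forall>i\<in>I. v \<in> M i \<longleftrightarrow> i \<in> \<sigma>}" "card (I - \<sigma>) < card Z"
    and step: "\<And>i. i \<in> I \<Longrightarrow> M' i = M i \<or> (\<exists>w\<in>Z. w \<notin> M i \<and> M' i = insert w (M i))"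
  shows "\<exists>u\<in>Z. \<forall>i\<in>I. M' i \<noteq> M i \<longrightarrow> u \<notin> M' i"
proof -
  define W where "W = (\<Union>i\<in>I - \<sigma>. M' i - M i)"
  have new: "finite (M' i - M i) \<and> card (M' i - M i) \<le> 1" if "i \<in> I" for i
    using step[OF that] by (auto simp: insert_Diff_if)
  then have "finite W" unfolding W_def using assms(1) by auto
  have "card W \<le> (\<Sum>i\<in>I - \<sigma>. 1)"
    unfolding W_def using assms(1) new by (intro card_UN_le[THEN order_trans] sum_mono) auto
  then have "card W < card Z" using Z by simp
  then obtain u where u: "u \<in> Z" "u \<notin> W"
    using card_mono[OF \<open>finite W\<close>, of Z] by (meson leD subsetI)
  have "u \<notin> M' i" if "i \<in> I" "M' i \<noteq> M i" for i
  proof -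
    have "i \<notin> \<sigma>"
    proof
      assume "i \<in> \<sigma>"
      then have "Z \<subseteq> M i" using Z \<open>i \<in> I\<close> by auto
      then show False using step[OF \<open>i \<in> I\<close>] \<open>M' i \<noteq> M i\<close> by blast
    qed
    then show ?thesis using u that Z by (auto simp: W_def)
  qed
  then show ?thesis using u by blast
qed

text \<open>us ! j is the optimal partner of request G ! j, and the vertices of {..<n} outside us are
  fresh. The min-term pays for the at most K fresh vertices that are requested singly at the end.\<close>
definition adversary_state ::
    "online_alg \<Rightarrow> nat \<Rightarrow> bool list set \<Rightarrow> nat \<Rightarrow> nat set list \<Rightarrow> nat list \<Rightarrow> bool" where
  "adversary_state A n I K G us \<longleftrightarrow>
     length G = length us \<and> distinct us \<and> set us \<subseteq> {..<n} \<and>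
     (\<forall>j<length us. us ! j \<in> G ! j) \<and> (\<forall>Z\<in>set G. Z \<subseteq> {..<n}) \<and>
     (\<forall>i\<in>I. potential ({..<n} - set us) (matched A n i {..<n} G)
              + min (card ({..<n} - set us)) K \<le> n + K)"

lemma adversary_state_Nil: "adversary_state A n I K [] []"
  by (simp add: adversary_state_def potential_def)

lemma adversary_state_snoc:
  assumes st: "adversary_state A n I K G us"
    and N: "N = {..<n} - set us" and Z: "Z \<subseteq> N" "u \<in> Z"
    and pot: "\<And>i. i \<in> I \<Longrightarrow>
      potential (N - {u}) (matched A n i {..<n} (G @ [Z])) + min (card (N - {u})) K
      \<le> potential N (matched A n i {..<n} G) + min (card N) K"
  shows "adversary_state A n I K (G @ [Z]) (us @ [u])"
proof -
  have "{..<n} - set (us @ [u]) = N - {u}" using N by auto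
  then show ?thesis
    using st N Z pot[THEN order_trans]
    by (fastforce simp: adversary_state_def nth_append less_Suc_eq)
qed

lemma adversary_state_snoc_block:
  assumes st: "adversary_state A n I K G us" and "finite I"
    and N: "N = {..<n} - set us" and "\<sigma> \<subseteq> I"
    and Z: "Z = {v\<in>N. \<forall>i\<in>I. v \<in> matched A n i {..<n} G \<longleftrightarrow> i \<in> \<sigma>}" "card (I - \<sigma>) < card Z"
  shows "\<exists>u. adversary_state A n I K (G @ [Z]) (us @ [u])"
proof -
  let ?M = "\<lambda>i. matched A n i {..<n} G"
  let ?M' = "\<lambda>i. matched A n i {..<n} (G @ [Z])"
  have "Z \<subseteq> N" using Z by blast
  then have step: "?M' i = ?M i \<or> (\<exists>w\<in>N. w \<notin> ?M i \<and> ?M' i = insert w (?M i))" for i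
    using matched_snoc_cases[of A n i "{..<n}" G Z] by blast
  obtain u where u: "u \<in> Z" and unclaimed: "\<forall>i\<in>I. ?M' i \<noteq> ?M i \<longrightarrow> u \<notin> ?M' i"
    using exists_unclaimed_vertex[OF \<open>finite I\<close> \<open>\<sigma> \<subseteq> I\<close> Z, of ?M'] matched_snoc_cases by blast
  have "adversary_state A n I K (G @ [Z]) (us @ [u])"
  proof (rule adversary_state_snoc[OF st N \<open>Z \<subseteq> N\<close> u])
    fix i assume "i \<in> I"
    have "finite N" "finite (?M i)" "u \<in> N"
      using N u \<open>Z \<subseteq> N\<close> finite_subset[OF matched_subset] by auto
    then have "potential (N - {u}) (?M' i) \<le> potential N (?M i)"
      using unclaimed \<open>i \<in> I\<close> by (intro potential_remove_le step) auto
    moreover have "card (N - {u}) \<le> card N" using \<open>finite N\<close> by (simp add: card_mono)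
    ultimately show "potential (N - {u}) (?M' i) + min (card (N - {u})) K
        \<le> potential N (?M i) + min (card N) K"
      by linarith
  qed
  then show ?thesis by blast
qed

lemma adversary_state_snoc_singleton:
  assumes st: "adversary_state A n I K G us"
    and N: "N = {..<n} - set us" "u \<in> N" "card N \<le> K"
  shows "adversary_state A n I K (G @ [{u}]) (us @ [u])"
proof (rule adversary_state_snoc[OF st N(1)])
  let ?M = "\<lambda>i. matched A n i {..<n} G"
  let ?M' = "\<lambda>i. matched A n i {..<n} (G @ [{u}])"
  fix i
  have "finite N" "finite (?M i)"
    using N finite_subset[OF matched_subset] by auto
  then have "potential (N - {u}) (?M' i) \<le> Suc (potential N (?M i))"
    using N matched_snoc_cases[of A n i "{..<n}" G "{u}"] by (intro potential_remove_le_Suc) auto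
  moreover have "Suc (min (card (N - {u})) K) = min (card N) K"
    using \<open>finite N\<close> N card_gt_0_iff[of N] by auto
  ultimately show "potential (N - {u}) (?M' i) + min (card (N - {u})) K
      \<le> potential N (?M i) + min (card N) K"
    by linarith
qed (use N in auto)

lemma adversary_state_extend:
  assumes st: "adversary_state A n I K G us" and "length us < n"
    and "finite I" and K: "K = card I * 2 ^ card I"
  shows "\<exists>Z u. adversary_state A n I K (G @ [Z]) (us @ [u])"
proof -
  define N where "N = {..<n} - set us"
  let ?C = "\<lambda>\<sigma>. {v\<in>N. \<forall>i\<in>I. v \<in> matched A n i {..<n} G \<longleftrightarrow> i \<in> \<sigma>}"
  show ?thesis
  proof (cases "\<exists>\<sigma>\<subseteq>I. card (I - \<sigma>) < card (?C \<sigma>)")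
    case True
    then show ?thesis
      using adversary_state_snoc_block[OF st \<open>finite I\<close> N_def] by blast
  next
    case False
    then have "card N \<le> K"
      unfolding K using \<open>finite I\<close>
      by (intro card_le_if_membership_classes_small[where M = "\<lambda>i. matched A n i {..<n} G"])
        (auto simp: N_def not_less)
    moreover have "card N = n - length us"
      using st by (simp add: N_def adversary_state_def card_Diff_subset distinct_card)
    then obtain u where "u \<in> N" using \<open>length us < n\<close> by fastforce
    ultimately show ?thesis
      using adversary_state_snoc_singleton[OF st N_def] by blast
  qed
qed

lemma exists_adversary_state:
  assumes "finite I" "K = card I * 2 ^ card I" "t \<le> n"
  shows "\<exists>G us. length us = t \<and> adversary_state A n I K G us"
  using \<open>t \<le> n\<close>
proof (induction t)
  case 0
  show ?case using adversary_state_Nil by blast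
next
  case (Suc t)
  then obtain G us where "length us = t" "adversary_state A n I K G us" by auto
  with Suc.prems assms(1,2) obtain Z u where "adversary_state A n I K (G @ [Z]) (us @ [u])"
    using adversary_state_extend by (metis Suc_le_lessD)
  then show ?case using \<open>length us = t\<close> by (intro exI[of _ "G @ [Z]"] exI[of _ "us @ [u]"]) simp
qed

lemma card_le_opt:
  assumes "finite U" "is_matching U G M"
  shows "card M \<le> opt U G"
proof -
  have "{M. is_matching U G M} \<subseteq> Pow ({..<length G} \<times> U)"
    by (auto simp: is_matching_def)
  then have "finite {M. is_matching U G M}"
    using assms(1) by (auto intro: finite_subset)
  then show ?thesis unfolding opt_def using assms(2) by (intro Max_ge) auto
qed

lemma length_le_opt:
  assumes "length us = length G" "distinct us" "set us \<subseteq> U" "finite U"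
    and "\<forall>j<length us. us ! j \<in> G ! j"
  shows "length G \<le> opt U G"
proof -
  define M where "M = (\<lambda>j. (j, us ! j)) ` {..<length G}"
  have "is_matching U G M"
    using assms nth_mem by (fastforce simp: is_matching_def M_def nth_eq_iff_index_eq)
  moreover have "card M = length G"
    unfolding M_def by (subst card_image) (auto intro: inj_onI)
  ultimately show ?thesis using card_le_opt[OF \<open>finite U\<close>] by metis
qed

lemma ratio_le_on_adversarial_instance:
  fixes A :: online_alg and adv_of :: "nat set \<Rightarrow> nat set list \<Rightarrow> bool list"
  assumes adv: "\<forall>U G. valid_instance U G \<longrightarrow> length (adv_of U G) = advice_bits (length G)"
    and "n \<ge> 1"
  shows "\<exists>U G. valid_instance U G \<and> length G = n \<and> opt U G > 0 \<and>
     real (alg_value A (adv_of U G) U G) / real (opt U G)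
       \<le> (real n + 2 ^ advice_bits n * 2 ^ (2 ^ advice_bits n)) / (2 * real n)"
proof -
  define I where "I = {s::bool list. length s = advice_bits n}"
  define K where "K = card I * 2 ^ card I"
  have fI: "finite I" and cI: "card I = 2 ^ advice_bits n"
    using finite_lists_length_eq[of "UNIV :: bool set"] card_lists_length_eq[of "UNIV :: bool set"]
    by (simp_all add: I_def)
  obtain G us where "length us = n" and st: "adversary_state A n I K G us"
    using exists_adversary_state[OF fI K_def order_refl] by blast
  then have len: "length G = n" and "set us = {..<n}"
    using st card_subset_eq[of "{..<n}" "set us"] by (auto simp: adversary_state_def distinct_card)
  have valid: "valid_instance {..<n} G"
    using st by (simp add: valid_instance_def adversary_state_def)
  have opt: "n \<le> opt {..<n} G"
    using st len length_le_opt[of us G "{..<n}"] by (auto simp: adversary_state_def)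
  define a where "a = adv_of {..<n} G"
  have "a \<in> I" using adv valid len by (simp add: a_def I_def)
  then have "2 * alg_value A a {..<n} G \<le> n + K"
    using st \<open>set us = {..<n}\<close> len
    by (force simp: adversary_state_def potential_def alg_value_eq_card_matched)
  then have "2 * real (alg_value A a {..<n} G) \<le> real n + real K"
    by (metis of_nat_add of_nat_le_iff of_nat_mult of_nat_numeral)
  then have "real (alg_value A a {..<n} G) / real (opt {..<n} G) \<le> (real n + real K) / 2 / real n"
    using opt \<open>n \<ge> 1\<close> by (intro frac_le) auto
  then show ?thesis
    using valid len opt \<open>n \<ge> 1\<close> unfolding a_def
    by (intro exI[of _ "{..<n}"] exI[of _ G]) (auto simp: K_def cI)
qed

lemma advice_bits_bounds:
  fixes n :: nat assumes n: "n \<ge> 16"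
  shows "real (2 ^ advice_bits n) \<le> log 2 (real n) / 2"
    and "real ((2::nat) ^ (2 ^ advice_bits n)) \<le> sqrt (real n)"
proof -
  define L where "L = log 2 (real n)"
  define ll where "ll = log 2 L"
  define b where "b = advice_bits n"
  have "L \<ge> 4" using n by (simp add: L_def le_log_iff powr_numeral)
  then have "ll \<ge> 2" by (simp add: ll_def le_log_iff powr_numeral)
  then have "log 2 ll \<ge> 1" by simp
  have "real (nat \<lfloor>x\<rfloor>) \<le> max 0 x" for x :: real
    by (cases "\<lfloor>x\<rfloor> \<ge> 0") auto
  from this[of "ll - log 2 ll"] have "real b \<le> max 0 (ll - log 2 ll)"
    by (simp add: b_def advice_bits_def L_def ll_def)
  then have "real b \<le> ll - 1"
    using \<open>ll \<ge> 2\<close> \<open>log 2 ll \<ge> 1\<close> by linarith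
  then have "2 powr real b \<le> 2 powr (ll - 1)" by (intro powr_mono) auto
  also have "\<dots> = L / 2" using \<open>L \<ge> 4\<close> by (simp add: powr_diff ll_def)
  finally have k: "real (2 ^ b) \<le> L / 2" by (simp add: powr_realpow)
  then show "real (2 ^ advice_bits n) \<le> log 2 (real n) / 2" by (simp add: b_def L_def)
  have "real ((2::nat) ^ (2 ^ b)) = 2 powr real (2 ^ b)"
    by (metis of_nat_numeral of_nat_power powr_realpow zero_less_numeral)
  also have "\<dots> \<le> 2 powr (L / 2)" using k by (intro powr_mono) auto
  also have "\<dots> = (2 powr L) powr (1/2)" by (simp add: powr_powr)
  also have "\<dots> = sqrt (real n)" using n by (simp add: L_def powr_half_sqrt)
  finally show "real ((2::nat) ^ (2 ^ advice_bits n)) \<le> sqrt (real n)" by (simp add: b_def)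
qed

lemma advice_slack_tendsto_zero:
  "(\<lambda>n. real (2 ^ advice_bits n * 2 ^ (2 ^ advice_bits n)) / (2 * real n)) \<longlonglongrightarrow> 0"
proof (rule real_tendsto_sandwich[of "\<lambda>_. 0" _ _ "\<lambda>n. log 2 (real n) / 2 * sqrt (real n) / (2 * real n)"])
  show "\<forall>\<^sub>F n in sequentially. real (2 ^ advice_bits n * 2 ^ (2 ^ advice_bits n)) / (2 * real n)
          \<le> log 2 (real n) / 2 * sqrt (real n) / (2 * real n)"
  proof (rule eventually_sequentiallyI[of 16])
    fix n :: nat assume n: "n \<ge> 16"
    have "real (2 ^ advice_bits n * 2 ^ (2 ^ advice_bits n))
        = real (2 ^ advice_bits n) * real ((2::nat) ^ (2 ^ advice_bits n))" by simp
    also have "\<dots> \<le> log 2 (real n) / 2 * sqrt (real n)"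
      using advice_bits_bounds[OF n] n by (intro mult_mono) auto
    finally show "real (2 ^ advice_bits n * 2 ^ (2 ^ advice_bits n)) / (2 * real n)
          \<le> log 2 (real n) / 2 * sqrt (real n) / (2 * real n)"
      by (intro divide_right_mono) auto
  qed
  show "(\<lambda>n. log 2 (real n) / 2 * sqrt (real n) / (2 * real n)) \<longlonglongrightarrow> 0" by real_asymp
qed auto

theorem corollary2:
  fixes A :: online_alg
    and adv_of :: "nat set \<Rightarrow> nat set list \<Rightarrow> bool list"
  assumes "\<forall>U G. valid_instance U G \<longrightarrow> length (adv_of U G) = advice_bits (length G)"
  shows "asymp_ratio A adv_of \<le> 1/2"
proof -
  define h where
    "h = (\<lambda>n. 1/2 + real (2 ^ advice_bits n * 2 ^ (2 ^ advice_bits n)) / (2 * real n))"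
  let ?F = "\<lambda>n. INF I \<in> {(U, G). valid_instance U G \<and> length G = n \<and> opt U G > 0}.
        ereal (real (alg_value A (adv_of (fst I) (snd I)) (fst I) (snd I)) / real (opt (fst I) (snd I)))"
  have "\<forall>\<^sub>F n in sequentially. ?F n \<le> ereal (h n)"
  proof (rule eventually_sequentiallyI[of 1])
    fix n :: nat assume "n \<ge> 1"
    then obtain U G where "valid_instance U G" "length G = n" "opt U G > 0"
      and "real (alg_value A (adv_of U G) U G) / real (opt U G) \<le> h n"
      using ratio_le_on_adversarial_instance[OF assms, of n A] by (auto simp: h_def add_divide_distrib)
    then show "?F n \<le> ereal (h n)" by (intro INF_lower2[of "(U, G)"]) auto
  qed
  then have "liminf ?F \<le> liminf (\<lambda>n. ereal (h n))" by (rule Liminf_mono)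
  moreover have "(\<lambda>n. ereal (h n)) \<longlonglongrightarrow> ereal (1/2 + 0)"
    unfolding h_def by (intro tendsto_ereal tendsto_add tendsto_const advice_slack_tendsto_zero)
  ultimately show ?thesis
    unfolding asymp_ratio_def by (simp add: lim_imp_Liminf one_ereal_def)
qed

end
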